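(* For every $t\in\mathbb{N}$ there exists $n_0(t)$ such that for all $n\ge n_0(t)$ the following holds. Let $\mathcal{F}\subseteq\mathcal{M}_{2n}$ be a $t$-intersecting family and $T^*=\{\{1,2\},\{3,4\},\dots,\{2t-1,2t\}\}$. For any set $T$ of $t$ pairwise disjoint edges of $K_{2n}$ such that $T\cap T^*=\emptyset$, $|V(T)\cap\{2i-1,2i\}|\ge1$ for all $i\in[t]$, and $T\subseteq\Delta([2t])$, we have \[|\mathcal{F}\!\downarrow_{T^*}|\cdot|\mathcal{F}\!\downarrow_T|\le\big((2(n-2t)-1)!!\big)^2.\]
   Context: $\mathcal{M}_{2n}$ is the set of perfect matchings of $K_{2n}$ on $[2n]$. A family $\mathcal{F}$ is $t$-intersecting if $|m\cap m'|\ge t$ for all $m,m'\in\mathcal{F}$. For a set $S$ of disjoint edges, $\mathcal{F}\!\downarrow_S=\{m\in\mathcal{F}:S\subseteq m\}$ and $V(S)$ is the set of endpoints of edges in $S$. For $V'\subseteq[2n]$, $\Delta(V')$ is the set of edges of $K_{2n}$ with at least one endpoint in $V'$. $(2k-1)!!=1\cdot3\cdots(2k-1)$. *)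

theory Defs
  imports Main
begin

definition edges_K :: "nat \<Rightarrow> nat set set" where
  "edges_K n = {e. e \<subseteq> {1..2*n} \<and> card e = 2}"

definition pairwise_disjoint_edges :: "nat set set \<Rightarrow> bool" where
  "pairwise_disjoint_edges S \<longleftrightarrow> (\<forall>e\<in>S. \<forall>f\<in>S. e \<noteq> f \<longrightarrow> e \<inter> f = {})"

definition perfect_matchings :: "nat \<Rightarrow> nat set set set" where
  "perfect_matchings n = {m. m \<subseteq> edges_K n \<and> pairwise_disjoint_edges m \<and> \<Union>m = {1..2*n}}"

definition t_intersecting :: "nat \<Rightarrow> nat set set set \<Rightarrow> bool" where
  "t_intersecting t F \<longleftrightarrow> (\<forall>m\<in>F. \<forall>m'\<in>F. card (m \<inter> m') \<ge> t)"

definition restrict_fam :: "nat set set set \<Rightarrow> nat set set \<Rightarrow> nat set set set" where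
  "restrict_fam F S = {m\<in>F. S \<subseteq> m}"

definition verts :: "nat set set \<Rightarrow> nat set" where
  "verts S = \<Union>S"

definition Delta :: "nat \<Rightarrow> nat set \<Rightarrow> nat set set" where
  "Delta n V' = {e\<in>edges_K n. e \<inter> V' \<noteq> {}}"

definition Tstar :: "nat \<Rightarrow> nat set set" where
  "Tstar t = {{2*i-1, 2*i} | i. i \<in> {1..t}}"

text \<open>odd_dfact k = (2k-1)!! = 1*3*...*(2k-1).\<close>
definition odd_dfact :: "nat \<Rightarrow> nat" where
  "odd_dfact k = (\<Prod>i\<in>{1..k}. 2*i - 1)"

end

(*
  Let A and B be the members of F containing T* and T respectively.  As T meets every pair of T*
  and T lies in Delta([2t]), members of B avoid T*, members of A avoid T, and A, B are cross
  t-intersecting.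

  Spread approximation: maximising (n+1)^|X| |A|X| over sets X of at most q+1 edges splits off
  subfamilies of A that are (n+1)-spread around a kernel X with |X| <= q, until fewer than
  (n+1)^(q+1) (2(n-t-q-1)-1)!! members are left.  A spread subfamily has a member avoiding any n
  given edges outside X, so every member of B, and then every kernel of B, meets every kernel of
  A in at least t edges.  If the kernels of B have no common t-set, every kernel of A has t+1
  edges in a set of size O(q^(t+1)), which costs A a factor n.  Otherwise the kernels of A and B
  have common t-sets S_A and S_B: a member of one family missing the other's core halves the
  count, S_A <> S_B fixes 2t+1 edges, and S_A = S_B puts both families among the matchings
  containing T* and S_A, resp. T and S_A.
  With q of order log n all error terms are negligible.
*)
theory Submission
  imports Defs "HOL-Real_Asymp.Real_Asymp"
begin

section \<open>Double factorials\<close>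

lemma odd_dfact_Suc: "odd_dfact (Suc k) = (2*k+1) * odd_dfact k"
  unfolding odd_dfact_def by (simp add: prod.cl_ivl_Suc mult.commute)

lemma odd_dfact_0 [simp]: "odd_dfact 0 = 1"
  by (simp add: odd_dfact_def)

lemma odd_dfact_diff_eq:
  assumes "k < n"
  shows "odd_dfact (n - k) = (2*(n - k) - 1) * odd_dfact (n - Suc k)"
proof -
  have "n - k = Suc (n - Suc k)"
    using assms by simp
  then show ?thesis
    by (simp add: odd_dfact_Suc)
qed

lemma odd_dfact_mono: "j \<le> k \<Longrightarrow> odd_dfact j \<le> odd_dfact k"
proof (induction k rule: dec_induct)
  case (step k)
  then show ?case by (simp add: odd_dfact_Suc)
qed simp_all

lemma odd_dfact_add_ge: "(2*k+1)^j * odd_dfact k \<le> odd_dfact (k + j)"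
proof (induction j)
  case (Suc j)
  have "(2*k+1)^Suc j * odd_dfact k = (2*k+1) * ((2*k+1)^j * odd_dfact k)"
    by (simp add: algebra_simps)
  also have "\<dots> \<le> (2*(k+j)+1) * odd_dfact (k+j)"
    using Suc by (intro mult_mono) auto
  finally show ?case by (simp add: odd_dfact_Suc)
qed simp

lemma odd_dfact_add_le: "odd_dfact (k + j) \<le> (2*(k+j))^j * odd_dfact k"
proof (induction j)
  case (Suc j)
  have "odd_dfact (k + Suc j) = (2*(k+j)+1) * odd_dfact (k+j)"
    by (simp add: odd_dfact_Suc)
  also have "\<dots> \<le> (2*(k + Suc j)) * ((2*(k+j))^j * odd_dfact k)"
    using Suc by (intro mult_mono) auto
  also have "\<dots> \<le> (2*(k + Suc j)) * ((2*(k + Suc j))^j * odd_dfact k)"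
    by (intro mult_mono power_mono) auto
  finally show ?case by (simp only: power_Suc mult.assoc)
qed simp

section \<open>Counting perfect matchings\<close>

lemma card_UN_le_mult:
  "finite I \<Longrightarrow> (\<And>i. i \<in> I \<Longrightarrow> card (f i) \<le> q) \<Longrightarrow> card (\<Union>i\<in>I. f i) \<le> card I * q"
  using card_UN_le[of I f] sum_mono[of I "\<lambda>i. card (f i)" "\<lambda>_. q"] by simp

definition perfect_matchings_on :: "'a set \<Rightarrow> 'a set set set" where
  "perfect_matchings_on V = {m. (\<forall>e\<in>m. card e = 2) \<and> pairwise disjnt m \<and> \<Union>m = V}"

lemma pairwise_disjoint_edges_iff: "pairwise_disjoint_edges S \<longleftrightarrow> pairwise disjnt S"
  unfolding pairwise_disjoint_edges_def pairwise_def disjnt_def ..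

lemma perfect_matchings_eq: "perfect_matchings n = perfect_matchings_on {1..2*n}"
  unfolding perfect_matchings_def perfect_matchings_on_def edges_K_def pairwise_disjoint_edges_iff
  by auto

lemma perfect_matching_edge_eq:
  "\<lbrakk>m \<in> perfect_matchings_on V; e \<in> m; f \<in> m; x \<in> e; x \<in> f\<rbrakk> \<Longrightarrow> e = f"
  unfolding perfect_matchings_on_def pairwise_def disjnt_def by blast

lemma finite_perfect_matchings_on: "finite V \<Longrightarrow> finite (perfect_matchings_on V)"
  by (rule finite_subset[of _ "Pow (Pow V)"]) (auto simp: perfect_matchings_on_def)

lemma finite_perfect_matching: "finite V \<Longrightarrow> m \<in> perfect_matchings_on V \<Longrightarrow> finite m"
  by (rule finite_subset[of _ "Pow V"]) (auto simp: perfect_matchings_on_def)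

lemma perfect_matchings_on_Diff:
  assumes m: "m \<in> perfect_matchings_on V" and Z: "Z \<subseteq> m"
  shows "m - Z \<in> perfect_matchings_on (V - \<Union>Z)"
proof -
  have "e \<inter> \<Union>Z = {}" if "e \<in> m - Z" for e
    using that Z perfect_matching_edge_eq[OF m] by blast
  moreover have "\<Union>m = V" "pairwise disjnt m" "\<forall>e\<in>m. card e = 2"
    using m unfolding perfect_matchings_on_def by auto
  ultimately have "\<Union>(m - Z) = V - \<Union>Z" "pairwise disjnt (m - Z)" "\<forall>e\<in>m - Z. card e = 2"
    by (auto intro: pairwise_subset)
  then show ?thesis
    unfolding perfect_matchings_on_def by blast
qed

lemma card_Union_matching:
  assumes V: "finite V" and m: "m \<in> perfect_matchings_on V" and Z: "Z \<subseteq> m"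
  shows "card (\<Union>Z) = 2 * card Z"
proof -
  have edges: "\<And>e. e \<in> Z \<Longrightarrow> card e = 2" and "pairwise disjnt Z"
    using m Z pairwise_subset unfolding perfect_matchings_on_def by blast+
  then have "card (\<Union>Z) = sum card Z"
    by (intro card_Union_disjoint) (auto intro: card_ge_0_finite)
  also have "\<dots> = 2 * card Z"
    using edges by simp
  finally show ?thesis .
qed

lemma card_edges_disjoint_le:
  assumes V: "finite V" and m: "m \<in> perfect_matchings_on V" and "W \<subseteq> V"
  shows "2 * card {e\<in>m. e \<inter> W = {}} \<le> card V - card W"
proof -
  have "\<Union>{e\<in>m. e \<inter> W = {}} \<subseteq> V - W"
    using m unfolding perfect_matchings_on_def by blast
  then have "card (\<Union>{e\<in>m. e \<inter> W = {}}) \<le> card V - card W"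
    using card_mono[of "V - W"] V \<open>W \<subseteq> V\<close> by (metis card_Diff_subset finite_Diff finite_subset)
  then show ?thesis
    using card_Union_matching[OF V m, of "{e\<in>m. e \<inter> W = {}}"] by simp
qed

lemma perfect_matchings_on_subset_UN:
  assumes "v \<in> V"
  shows "perfect_matchings_on V \<subseteq> (\<Union>w\<in>V - {v}. insert {v,w} ` perfect_matchings_on (V - {v,w}))"
proof
  fix m assume m: "m \<in> perfect_matchings_on V"
  then obtain e where e: "e \<in> m" "v \<in> e" "card e = 2"
    using assms unfolding perfect_matchings_on_def by blast
  then obtain w where w: "w \<noteq> v" "e = {v,w}"
    by (metis card_2_iff insert_commute insert_iff singletonD)
  have "w \<in> V - {v}"
    using m e w unfolding perfect_matchings_on_def by blast
  moreover have "m - {e} \<in> perfect_matchings_on (V - {v,w})"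
    using perfect_matchings_on_Diff[OF m, of "{e}"] e w by simp
  moreover have "m = insert {v,w} (m - {e})"
    using e w by auto
  ultimately show "m \<in> (\<Union>w\<in>V - {v}. insert {v,w} ` perfect_matchings_on (V - {v,w}))"
    by blast
qed

lemma card_perfect_matchings_on_le:
  "finite V \<Longrightarrow> card V = 2*k \<Longrightarrow> card (perfect_matchings_on V) \<le> odd_dfact k"
proof (induction k arbitrary: V)
  case 0
  then have "perfect_matchings_on V \<subseteq> {{}}"
    by (force simp: perfect_matchings_on_def)
  then show ?case
    using card_mono[of "{{}}" "perfect_matchings_on V"] by simp
next
  case (Suc k)
  then obtain v where v: "v \<in> V"
    by fastforce
  have "card (perfect_matchings_on V)
      \<le> card (\<Union>w\<in>V - {v}. insert {v,w} ` perfect_matchings_on (V - {v,w}))"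
    using perfect_matchings_on_subset_UN[OF v] Suc.prems
    by (intro card_mono) (auto intro: finite_perfect_matchings_on)
  also have "\<dots> \<le> (\<Sum>w\<in>V - {v}. card (insert {v,w} ` perfect_matchings_on (V - {v,w})))"
    using Suc.prems by (intro card_UN_le) simp
  also have "\<dots> \<le> (\<Sum>w\<in>V - {v}. odd_dfact k)"
  proof (rule sum_mono)
    fix w assume "w \<in> V - {v}"
    then have "card (V - {v,w}) = 2*k"
      using v Suc.prems by (auto simp: card_Diff_subset)
    then have "card (perfect_matchings_on (V - {v,w})) \<le> odd_dfact k"
      using Suc by simp
    moreover have "card (insert {v,w} ` perfect_matchings_on (V - {v,w}))
        \<le> card (perfect_matchings_on (V - {v,w}))"
      using Suc.prems(1) by (simp add: card_image_le finite_perfect_matchings_on)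
    ultimately show "card (insert {v,w} ` perfect_matchings_on (V - {v,w})) \<le> odd_dfact k"
      by linarith
  qed
  also have "\<dots> = odd_dfact (Suc k)"
    using Suc.prems v by (simp add: odd_dfact_Suc)
  finally show ?case .
qed

lemma card_restrict_perfect_matchings_on_le:
  assumes V: "finite V" "card V = 2*n"
  shows "card (restrict_fam (perfect_matchings_on V) Z) \<le> odd_dfact (n - card Z)"
proof (cases "restrict_fam (perfect_matchings_on V) Z = {}")
  case False
  then obtain m0 where m0: "m0 \<in> perfect_matchings_on V" "Z \<subseteq> m0"
    unfolding restrict_fam_def by blast
  define V' where "V' = V - \<Union>Z"
  have "\<Union>Z \<subseteq> V"
    using m0 unfolding perfect_matchings_on_def by blast
  then have "card V' = 2 * (n - card Z)"
    using V card_Union_matching[OF V(1) m0] unfolding V'_def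
    by (simp add: card_Diff_subset finite_subset)
  have "inj_on (\<lambda>m. m - Z) (restrict_fam (perfect_matchings_on V) Z)"
    by (rule inj_onI) (auto simp: restrict_fam_def)
  moreover have "(\<lambda>m. m - Z) ` restrict_fam (perfect_matchings_on V) Z \<subseteq> perfect_matchings_on V'"
    unfolding V'_def restrict_fam_def using perfect_matchings_on_Diff by blast
  ultimately have "card (restrict_fam (perfect_matchings_on V) Z) \<le> card (perfect_matchings_on V')"
    using V(1) unfolding V'_def by (metis card_image card_mono finite_Diff finite_perfect_matchings_on)
  also have "\<dots> \<le> odd_dfact (n - card Z)"
    using card_perfect_matchings_on_le V(1) \<open>card V' = _\<close> unfolding V'_def by blast
  finally show ?thesis .
qed simp

lemma finite_perfect_matchings: "finite (perfect_matchings n)"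
  by (simp add: perfect_matchings_eq finite_perfect_matchings_on)

lemma card_restrict_perfect_matchings_le:
  "card (restrict_fam (perfect_matchings n) Z) \<le> odd_dfact (n - card Z)"
  unfolding perfect_matchings_eq by (rule card_restrict_perfect_matchings_on_le) auto

lemma card_le_restrict_perfect_matchings:
  "G \<subseteq> restrict_fam (perfect_matchings n) Z \<Longrightarrow> card G \<le> odd_dfact (n - card Z)"
  using card_mono[OF _ _, of "restrict_fam (perfect_matchings n) Z" G]
    card_restrict_perfect_matchings_le[of n Z] finite_perfect_matchings[of n]
  unfolding restrict_fam_def by fastforce

lemma card_le_UN_restrict_perfect_matchings:
  assumes "finite I" and G: "G \<subseteq> (\<Union>i\<in>I. restrict_fam (perfect_matchings n) (Z i))"
    and large: "\<And>i. i \<in> I \<Longrightarrow> k \<le> card (Z i)"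
  shows "card G \<le> card I * odd_dfact (n - k)"
proof -
  have "card G \<le> card (\<Union>i\<in>I. restrict_fam (perfect_matchings n) (Z i))"
    using G \<open>finite I\<close> finite_perfect_matchings by (intro card_mono) (auto simp: restrict_fam_def)
  also have "\<dots> \<le> card I * odd_dfact (n - k)"
  proof (rule card_UN_le_mult[OF \<open>finite I\<close>])
    fix i assume "i \<in> I"
    then have "odd_dfact (n - card (Z i)) \<le> odd_dfact (n - k)"
      using large[of i] by (intro odd_dfact_mono) simp
    then show "card (restrict_fam (perfect_matchings n) (Z i)) \<le> odd_dfact (n - k)"
      using card_restrict_perfect_matchings_le[of n "Z i"] by linarith
  qed
  finally show ?thesis .
qed

lemma finite_subset_restrict_perfect_matchings:
  "G \<subseteq> restrict_fam (perfect_matchings n) Z \<Longrightarrow> finite G"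
  using finite_perfect_matchings[of n] unfolding restrict_fam_def by (blast intro: finite_subset)

lemma finite_edges_K: "finite (edges_K n)"
  by (rule finite_subset[of _ "Pow {1..2*n}"]) (auto simp: edges_K_def)

lemma perfect_matching_subset_edges: "m \<in> perfect_matchings n \<Longrightarrow> m \<subseteq> edges_K n"
  by (simp add: perfect_matchings_def)

lemma finite_member_perfect_matchings: "m \<in> perfect_matchings n \<Longrightarrow> finite m"
  unfolding perfect_matchings_eq using finite_perfect_matching[of "{1..2*n}" m] by blast

lemma card_perfect_matching:
  assumes "m \<in> perfect_matchings n"
  shows "card m = n"
proof -
  have "\<Union>m = {1..2*n}"
    using assms unfolding perfect_matchings_eq perfect_matchings_on_def by blast
  then show ?thesis
    using card_Union_matching[of "{1..2*n}" m m] assms unfolding perfect_matchings_eq by simp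
qed

section \<open>Spread families and kernels\<close>

text \<open>Members of the families considered below all contain the fixed set \<open>P\<close>, so the
  elements of \<open>P\<close> are exempt from the spreadness condition.\<close>

definition spread :: "nat \<Rightarrow> 'a set \<Rightarrow> 'a set \<Rightarrow> 'a set set \<Rightarrow> bool" where
  "spread r P X H \<longleftrightarrow> H \<noteq> {} \<and> (\<forall>h\<in>H. X \<subseteq> h) \<and>
     (\<forall>e. e \<notin> X \<longrightarrow> e \<notin> P \<longrightarrow> r * card {h\<in>H. e \<in> h} \<le> card H)"

lemma exists_member_avoiding:
  assumes H: "finite H" "H \<noteq> {}" and E: "finite E" "card E \<le> n"
    and few: "\<And>e. e \<in> E \<Longrightarrow> (n+1) * card {h\<in>H. e \<in> h} \<le> card H"
  shows "\<exists>h\<in>H. h \<inter> E = {}"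
proof (rule ccontr)
  assume "\<not> (\<exists>h\<in>H. h \<inter> E = {})"
  then have "H \<subseteq> (\<Union>e\<in>E. {h\<in>H. e \<in> h})"
    by blast
  then have "card H \<le> card (\<Union>e\<in>E. {h\<in>H. e \<in> h})"
    using H E by (intro card_mono) auto
  also have "\<dots> \<le> (\<Sum>e\<in>E. card {h\<in>H. e \<in> h})"
    by (rule card_UN_le[OF E(1)])
  finally have "(n+1) * card H \<le> (n+1) * (\<Sum>e\<in>E. card {h\<in>H. e \<in> h})"
    by (rule mult_le_mono2)
  also have "\<dots> = (\<Sum>e\<in>E. (n+1) * card {h\<in>H. e \<in> h})"
    by (simp add: sum_distrib_left)
  also have "\<dots> \<le> card E * card H"
    using few sum_mono[of E _ "\<lambda>_. card H"] by simp
  also have "\<dots> \<le> n * card H"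
    using E by simp
  finally show False
    using H by (simp add: card_gt_0_iff)
qed

lemma spread_transfers_intersection:
  assumes sp: "spread (n+1) P X H" and "finite H"
    and Z: "finite Z" "card Z \<le> n" "Z \<inter> P = {}"
    and meets: "\<And>h. h \<in> H \<Longrightarrow> t \<le> card (h \<inter> Z)"
  shows "t \<le> card (Z \<inter> X)"
proof -
  have "card (Z - X) \<le> n"
    using Z by (meson card_mono Diff_subset finite_Diff le_trans)
  moreover have "(n+1) * card {h\<in>H. e \<in> h} \<le> card H" if "e \<in> Z - X" for e
    using sp Z(3) that unfolding spread_def by blast
  ultimately obtain h where h: "h \<in> H" "h \<inter> (Z - X) = {}"
    using exists_member_avoiding[of H "Z - X" n] sp \<open>finite H\<close> Z(1)
    unfolding spread_def by blast
  then have "card (h \<inter> Z) \<le> card (Z \<inter> X)"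
    using Z(1) by (intro card_mono) auto
  then show ?thesis
    using meets[OF h(1)] by simp
qed

definition kernel :: "nat \<Rightarrow> nat \<Rightarrow> 'a set \<Rightarrow> 'a set set \<Rightarrow> 'a set \<Rightarrow> bool" where
  "kernel n q P A X \<longleftrightarrow> X \<inter> P = {} \<and> finite X \<and> card X \<le> q \<and> (\<exists>H\<subseteq>A. spread (n+1) P X H)"

lemma kernel_subset_member: "kernel n q P A X \<Longrightarrow> \<exists>a\<in>A. X \<subseteq> a"
  unfolding kernel_def spread_def by blast

definition remainder_bound :: "nat \<Rightarrow> nat \<Rightarrow> nat \<Rightarrow> nat" where
  "remainder_bound n k q = (n+1)^(q+1) * odd_dfact (n - (k + q + 1))"

definition kernel_cover :: "nat \<Rightarrow> nat \<Rightarrow> 'a set \<Rightarrow> 'a set set \<Rightarrow> 'a set set \<Rightarrow> bool" where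
  "kernel_cover n q P A K \<longleftrightarrow> (\<forall>X\<in>K. kernel n q P A X) \<and>
     card {a\<in>A. \<forall>X\<in>K. \<not> X \<subseteq> a} \<le> remainder_bound n (card P) q"

lemma spread_if_weight_maximal:
  assumes "finite X" and "restrict_fam G X \<noteq> {}" and members: "\<And>g. g \<in> G \<Longrightarrow> g \<subseteq> E"
    and maximal: "\<And>e. e \<in> E \<Longrightarrow> e \<notin> X \<Longrightarrow> e \<notin> P \<Longrightarrow>
      (n+1)^card (insert e X) * card (restrict_fam G (insert e X))
        \<le> (n+1)^card X * card (restrict_fam G X)"
  shows "spread (n+1) P X (restrict_fam G X)"
proof -
  have "(n+1) * card {h \<in> restrict_fam G X. e \<in> h} \<le> card (restrict_fam G X)"
    if e: "e \<notin> X" "e \<notin> P" for e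
  proof (cases "e \<in> E")
    case True
    have "{h \<in> restrict_fam G X. e \<in> h} = restrict_fam G (insert e X)"
      unfolding restrict_fam_def by blast
    then have "(n+1)^card X * ((n+1) * card {h \<in> restrict_fam G X. e \<in> h})
        \<le> (n+1)^card X * card (restrict_fam G X)"
      using maximal[OF True e] e(1) \<open>finite X\<close> by (simp add: algebra_simps)
    then show ?thesis
      by (subst (asm) mult_le_cancel1) simp
  next
    case False
    then have "{h \<in> restrict_fam G X. e \<in> h} = {}"
      using members unfolding restrict_fam_def by blast
    then show ?thesis
      by (simp only: card.empty mult_0_right le0)
  qed
  then show ?thesis
    using \<open>restrict_fam G X \<noteq> {}\<close> unfolding spread_def restrict_fam_def by auto
qed

lemma exists_spread_restriction:
  assumes G: "G \<subseteq> restrict_fam (perfect_matchings n) P" and "finite P"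
    and large: "remainder_bound n (card P) q < card G"
  shows "\<exists>X. X \<inter> P = {} \<and> finite X \<and> card X \<le> q \<and> spread (n+1) P X (restrict_fam G X)"
proof -
  (* A maximiser of the weight with q + 1 edges would leave at most remainder_bound matchings
     in G; any other maximiser is spread. *)
  define Dom where "Dom = {Z. Z \<subseteq> edges_K n \<and> Z \<inter> P = {} \<and> card Z \<le> q+1}"
  define \<Phi> where "\<Phi> Z = (n+1)^card Z * card (restrict_fam G Z)" for Z
  have "finite Dom"
    unfolding Dom_def by (rule finite_subset[of _ "Pow (edges_K n)"]) (auto simp: finite_edges_K)
  moreover have "{} \<in> Dom"
    unfolding Dom_def by simp
  ultimately have "Max (\<Phi> ` Dom) \<in> \<Phi> ` Dom" and "\<And>Z. Z \<in> Dom \<Longrightarrow> \<Phi> Z \<le> Max (\<Phi> ` Dom)"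
    by (auto intro!: Max_in)
  then obtain X where X: "X \<in> Dom" and X_max: "\<And>Z. Z \<in> Dom \<Longrightarrow> \<Phi> Z \<le> \<Phi> X"
    by (metis imageE)
  have "finite X"
    using X finite_edges_K unfolding Dom_def by (blast intro: finite_subset)
  have "card G \<le> \<Phi> X"
    using X_max[OF \<open>{} \<in> Dom\<close>] by (simp add: \<Phi>_def restrict_fam_def)
  have "card X \<noteq> q + 1"
  proof
    assume card_X: "card X = q + 1"
    have "restrict_fam G X \<subseteq> restrict_fam (perfect_matchings n) (P \<union> X)"
      using G unfolding restrict_fam_def by blast
    then have "card (restrict_fam G X) \<le> odd_dfact (n - card (P \<union> X))"
      by (rule card_le_restrict_perfect_matchings)
    moreover have "card (P \<union> X) = card P + q + 1"
      using X card_X \<open>finite P\<close> \<open>finite X\<close> unfolding Dom_def by (simp add: card_Un_disjoint Int_commute)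
    ultimately have "\<Phi> X \<le> remainder_bound n (card P) q"
      using card_X unfolding \<Phi>_def remainder_bound_def by simp
    then show False
      using large \<open>card G \<le> \<Phi> X\<close> by simp
  qed
  then have "card X \<le> q"
    using X unfolding Dom_def by simp
  have "restrict_fam G X \<noteq> {}"
    using \<open>card G \<le> \<Phi> X\<close> large unfolding \<Phi>_def by auto
  moreover have "\<Phi> (insert e X) \<le> \<Phi> X" if "e \<in> edges_K n" "e \<notin> X" "e \<notin> P" for e
    using X_max X that \<open>card X \<le> q\<close> \<open>finite X\<close> unfolding Dom_def by auto
  moreover have "\<And>g. g \<in> G \<Longrightarrow> g \<subseteq> edges_K n"
    using G perfect_matching_subset_edges unfolding restrict_fam_def by blast
  ultimately have "spread (n+1) P X (restrict_fam G X)"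
    using \<open>finite X\<close> unfolding \<Phi>_def by (intro spread_if_weight_maximal[where E = "edges_K n"]) auto
  moreover have "X \<inter> P = {}"
    using X unfolding Dom_def by blast
  ultimately show ?thesis
    using \<open>finite X\<close> \<open>card X \<le> q\<close> by blast
qed

lemma kernel_cover_exists:
  assumes A: "A \<subseteq> restrict_fam (perfect_matchings n) P" and "finite P"
  shows "\<exists>K. kernel_cover n q P A K"
proof -
  have "\<exists>K. (\<forall>X\<in>K. kernel n q P A X) \<and> card {g\<in>G. \<forall>X\<in>K. \<not> X \<subseteq> g} \<le> remainder_bound n (card P) q"
    if "G \<subseteq> A" for G
    using that
  proof (induction "card G" arbitrary: G rule: less_induct)
    case less
    have "finite G"
      using less.prems A finite_subset_restrict_perfect_matchings by blast
    show ?case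
    proof (cases "card G \<le> remainder_bound n (card P) q")
      case True
      then show ?thesis
        by (intro exI[of _ "{}"]) simp
    next
      case False
      then obtain X where X: "X \<inter> P = {}" "finite X" "card X \<le> q"
        and sp: "spread (n+1) P X (restrict_fam G X)"
        using exists_spread_restriction[of G n P q] less.prems A \<open>finite P\<close> by auto
      moreover have "restrict_fam G X \<subseteq> A"
        using less.prems unfolding restrict_fam_def by blast
      ultimately have "kernel n q P A X"
        unfolding kernel_def by blast
      have "restrict_fam G X \<noteq> {}"
        using sp unfolding spread_def by blast
      then have "card (G - restrict_fam G X) < card G"
        using \<open>finite G\<close> by (intro psubset_card_mono) (auto simp: restrict_fam_def)
      then obtain K where K: "\<forall>Y\<in>K. kernel n q P A Y"
        and rest: "card {g\<in>G - restrict_fam G X. \<forall>Y\<in>K. \<not> Y \<subseteq> g} \<le> remainder_bound n (card P) q"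
        using less.hyps[of "G - restrict_fam G X"] less.prems by blast
      have "{g\<in>G. \<forall>Y\<in>insert X K. \<not> Y \<subseteq> g} = {g\<in>G - restrict_fam G X. \<forall>Y\<in>K. \<not> Y \<subseteq> g}"
        unfolding restrict_fam_def by blast
      then show ?thesis
        using K rest \<open>kernel n q P A X\<close> by (intro exI[of _ "insert X K"]) simp
    qed
  qed
  then show ?thesis
    unfolding kernel_cover_def by blast
qed

lemma card_le_if_meets_set:
  assumes G: "G \<subseteq> restrict_fam (perfect_matchings n) P" and "finite P"
    and U: "finite U" "U \<inter> P = {}" and meets: "\<And>a. a \<in> G \<Longrightarrow> k \<le> card (a \<inter> U)"
  shows "card G \<le> (card U choose k) * odd_dfact (n - (card P + k))"
proof -
  define Ws where "Ws = {W. W \<subseteq> U \<and> card W = k}"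
  have "G \<subseteq> (\<Union>W\<in>Ws. restrict_fam (perfect_matchings n) (P \<union> W))"
  proof
    fix a assume a: "a \<in> G"
    then obtain W where "W \<subseteq> a \<inter> U" "card W = k"
      using meets by (meson obtain_subset_with_card_n)
    then show "a \<in> (\<Union>W\<in>Ws. restrict_fam (perfect_matchings n) (P \<union> W))"
      using a G unfolding Ws_def restrict_fam_def by blast
  qed
  moreover have "card (P \<union> W) = card P + k" if "W \<in> Ws" for W
    using that U \<open>finite P\<close> unfolding Ws_def by (subst card_Un_disjoint) (auto intro: finite_subset)
  ultimately have "card G \<le> card Ws * odd_dfact (n - (card P + k))"
    using U(1) unfolding Ws_def by (intro card_le_UN_restrict_perfect_matchings) auto
  then show ?thesis
    using n_subsets[OF U(1)] unfolding Ws_def by simp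
qed

lemma exists_Int_notin:
  assumes "finite S" "card S = t" "\<not> S \<subseteq> Y" "t \<le> card (X \<inter> Y)"
  shows "\<exists>g\<in>X \<inter> Y. g \<notin> S"
proof (rule ccontr)
  assume "\<not> (\<exists>g\<in>X \<inter> Y. g \<notin> S)"
  then have "card (X \<inter> Y) \<le> card (S \<inter> Y)"
    using \<open>finite S\<close> by (intro card_mono) auto
  also have "\<dots> < card S"
    using assms(1,3) by (intro psubset_card_mono) auto
  finally show False
    using assms(2,4) by simp
qed

lemma card_Int_Suc_le_if_escapes:
  assumes "finite U" "Y1 \<subseteq> U" "finite Y1" "t \<le> card (X \<inter> Y1)"
    and escape: "\<And>S. S \<subseteq> Y1 \<Longrightarrow> card S = t \<Longrightarrow> \<exists>Y\<subseteq>U. \<not> S \<subseteq> Y \<and> t \<le> card (X \<inter> Y)"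
  shows "t + 1 \<le> card (X \<inter> U)"
proof (cases "t + 1 \<le> card (X \<inter> Y1)")
  case True
  moreover have "card (X \<inter> Y1) \<le> card (X \<inter> U)"
    using assms(1,2) by (intro card_mono) auto
  ultimately show ?thesis
    by linarith
next
  case False
  then have S: "finite (X \<inter> Y1)" "card (X \<inter> Y1) = t"
    using assms(3,4) by auto
  then obtain Y where "Y \<subseteq> U" "\<not> X \<inter> Y1 \<subseteq> Y" "t \<le> card (X \<inter> Y)"
    using escape by blast
  then obtain g where "g \<in> X \<inter> Y" "g \<notin> X \<inter> Y1"
    using exists_Int_notin[OF S] by blast
  then have "insert g (X \<inter> Y1) \<subseteq> X \<inter> U"
    using \<open>Y \<subseteq> U\<close> assms(2) by blast
  then have "card (insert g (X \<inter> Y1)) \<le> card (X \<inter> U)"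
    using assms(1) by (intro card_mono) auto
  then show ?thesis
    using \<open>g \<notin> X \<inter> Y1\<close> S by simp
qed

lemma no_common_subset_witness:
  fixes \<Y> :: "'a set set"
  assumes "\<Y> \<noteq> {}" and bounded: "\<And>Y. Y \<in> \<Y> \<Longrightarrow> finite Y \<and> card Y \<le> q"
    and no_common: "\<And>S. card S = t \<Longrightarrow> \<exists>Y\<in>\<Y>. \<not> S \<subseteq> Y"
  shows "\<exists>U. finite U \<and> U \<subseteq> \<Union>\<Y> \<and> card U \<le> q + (q choose t) * q \<and>
    (\<forall>X. (\<forall>Y\<in>\<Y>. t \<le> card (X \<inter> Y)) \<longrightarrow> t + 1 \<le> card (X \<inter> U))"
proof -
  obtain Y1 where Y1: "Y1 \<in> \<Y>" "finite Y1" "card Y1 \<le> q"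
    using \<open>\<Y> \<noteq> {}\<close> bounded by blast
  define Ss where "Ss = {S. S \<subseteq> Y1 \<and> card S = t}"
  have "finite Ss" "card Ss \<le> q choose t"
    unfolding Ss_def using Y1 by (simp_all add: n_subsets binomial_right_mono)
  have "\<forall>S\<in>Ss. \<exists>Y. Y \<in> \<Y> \<and> \<not> S \<subseteq> Y"
    using no_common unfolding Ss_def by blast
  then have "\<exists>f. \<forall>S\<in>Ss. f S \<in> \<Y> \<and> \<not> S \<subseteq> f S"
    by (rule bchoice)
  then obtain f where f: "\<And>S. S \<in> Ss \<Longrightarrow> f S \<in> \<Y> \<and> \<not> S \<subseteq> f S"
    by blast
  define U where "U = Y1 \<union> (\<Union>S\<in>Ss. f S)"
  have "finite U" "U \<subseteq> \<Union>\<Y>"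
    unfolding U_def using Y1 \<open>finite Ss\<close> f bounded by auto
  moreover have "card U \<le> q + (q choose t) * q"
  proof -
    have "card (\<Union>S\<in>Ss. f S) \<le> card Ss * q"
      using f bounded by (intro card_UN_le_mult[OF \<open>finite Ss\<close>]) blast
    also have "\<dots> \<le> (q choose t) * q"
      using \<open>card Ss \<le> q choose t\<close> by simp
    finally show ?thesis
      using card_Un_le[of Y1 "\<Union>S\<in>Ss. f S"] Y1(3) unfolding U_def by linarith
  qed
  moreover have "t + 1 \<le> card (X \<inter> U)" if meets: "\<forall>Y\<in>\<Y>. t \<le> card (X \<inter> Y)" for X
  proof (rule card_Int_Suc_le_if_escapes)
    show "finite U" "Y1 \<subseteq> U" "finite Y1" "t \<le> card (X \<inter> Y1)"
      using \<open>finite U\<close> Y1 meets unfolding U_def by auto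
    show "\<exists>Y\<subseteq>U. \<not> S \<subseteq> Y \<and> t \<le> card (X \<inter> Y)" if "S \<subseteq> Y1" "card S = t" for S
      using that f[of S] meets unfolding Ss_def U_def by blast
  qed
  ultimately show ?thesis
    by blast
qed

lemma card_le_covered_plus_uncovered:
  "card A \<le> card {a\<in>A. \<exists>X\<in>K. X \<subseteq> a} + card {a\<in>A. \<forall>X\<in>K. \<not> X \<subseteq> a}"
proof -
  have "card A = card ({a\<in>A. \<exists>X\<in>K. X \<subseteq> a} \<union> {a\<in>A. \<forall>X\<in>K. \<not> X \<subseteq> a})"
    by (rule arg_cong[where f = card]) blast
  also have "\<dots> \<le> card {a\<in>A. \<exists>X\<in>K. X \<subseteq> a} + card {a\<in>A. \<forall>X\<in>K. \<not> X \<subseteq> a}"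
    by (rule card_Un_le)
  finally show ?thesis .
qed

section \<open>Cross-intersecting families of matchings\<close>

locale cross_intersecting_pair =
  fixes n t :: nat and P Q :: "nat set set" and A B :: "nat set set set"
  assumes A_subset: "A \<subseteq> restrict_fam (perfect_matchings n) P"
    and B_subset: "B \<subseteq> restrict_fam (perfect_matchings n) Q"
    and finite_P: "finite P" and card_P: "card P = t"
    and finite_Q: "finite Q" and card_Q: "card Q = t"
    and cross: "\<And>a b. a \<in> A \<Longrightarrow> b \<in> B \<Longrightarrow> t \<le> card (a \<inter> b)"
    and A_disjoint_Q: "\<And>a. a \<in> A \<Longrightarrow> a \<inter> Q = {}"
    and B_disjoint_P: "\<And>b. b \<in> B \<Longrightarrow> b \<inter> P = {}"

sublocale cross_intersecting_pair \<subseteq> swap: cross_intersecting_pair n t Q P B A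
proof
  show "t \<le> card (b \<inter> a)" if "b \<in> B" "a \<in> A" for b a
    using cross[OF that(2,1)] by (simp add: Int_commute)
qed (use A_subset B_subset finite_P finite_Q card_P card_Q A_disjoint_Q B_disjoint_P in auto)

context cross_intersecting_pair
begin

lemma card_restrict_A_le: "card (restrict_fam A S) \<le> odd_dfact (n - card (P \<union> S))"
  using A_subset unfolding restrict_fam_def
  by (intro card_le_restrict_perfect_matchings) (auto simp: restrict_fam_def)

lemma card_A_le: "card A \<le> odd_dfact (n - t)"
  using card_restrict_A_le[of "{}"] card_P by (simp add: restrict_fam_def)

lemma kernel_disjoint_Q: "kernel n q P A X \<Longrightarrow> X \<inter> Q = {}"
  using kernel_subset_member A_disjoint_Q by blast

lemma kernel_meets_B:
  assumes X: "kernel n q P A X" and b: "b \<in> B"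
  shows "t \<le> card (b \<inter> X)"
proof -
  obtain H where H: "H \<subseteq> A" "spread (n+1) P X H"
    using X unfolding kernel_def by blast
  have "b \<in> perfect_matchings n"
    using b B_subset unfolding restrict_fam_def by blast
  then have "finite b" "card b = n"
    by (simp_all add: card_perfect_matching finite_member_perfect_matchings)
  moreover have "finite H"
    using H(1) A_subset finite_subset_restrict_perfect_matchings by blast
  moreover have "t \<le> card (h \<inter> b)" if "h \<in> H" for h
    using cross H(1) that b by blast
  ultimately show ?thesis
    using spread_transfers_intersection[OF H(2)] B_disjoint_P[OF b] by simp
qed

lemma kernels_meet:
  assumes X: "kernel n q P A X" and Y: "kernel n q Q B Y" and "q \<le> n"
  shows "t \<le> card (X \<inter> Y)"
proof -
  obtain H where H: "H \<subseteq> B" "spread (n+1) Q Y H"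
    using Y unfolding kernel_def by blast
  have "finite H"
    using H(1) B_subset finite_subset_restrict_perfect_matchings by blast
  moreover have "finite X" "card X \<le> n"
    using X \<open>q \<le> n\<close> unfolding kernel_def by auto
  ultimately show ?thesis
    using spread_transfers_intersection[OF H(2)] H(1) kernel_meets_B[OF X]
      kernel_disjoint_Q[OF X] by auto
qed

lemma card_B_le_if_kernel:
  assumes X: "kernel n q P A X"
  shows "card B \<le> (q choose t) * odd_dfact (n - 2*t)"
proof -
  have "finite X" "card X \<le> q"
    using X unfolding kernel_def by auto
  then have "card B \<le> (card X choose t) * odd_dfact (n - (card Q + t))"
    using card_le_if_meets_set[OF B_subset finite_Q] kernel_meets_B[OF X]
      kernel_disjoint_Q[OF X] by (simp add: Int_commute)
  also have "\<dots> \<le> (q choose t) * odd_dfact (n - 2*t)"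
    using \<open>card X \<le> q\<close> card_Q by (simp add: mult_2 binomial_right_mono)
  finally show ?thesis .
qed

lemma card_A_le_if_common_core:
  assumes cover: "kernel_cover n q P A K" and "K \<noteq> {}" and core: "\<And>X. X \<in> K \<Longrightarrow> S \<subseteq> X"
  shows "finite S" "S \<inter> P = {}" "S \<inter> Q = {}"
    and "card A \<le> card (restrict_fam A S) + remainder_bound n t q"
proof -
  obtain X where "X \<in> K"
    using \<open>K \<noteq> {}\<close> by blast
  then have X: "kernel n q P A X" "S \<subseteq> X"
    using cover core unfolding kernel_cover_def by auto
  then show "finite S" "S \<inter> P = {}" "S \<inter> Q = {}"
    using kernel_disjoint_Q[OF X(1)] unfolding kernel_def by (auto intro: finite_subset)
  have "{a\<in>A. \<exists>X\<in>K. X \<subseteq> a} \<subseteq> restrict_fam A S"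
    using core unfolding restrict_fam_def by blast
  then have "card {a\<in>A. \<exists>X\<in>K. X \<subseteq> a} \<le> card (restrict_fam A S)"
    using finite_subset_restrict_perfect_matchings[OF A_subset]
    by (intro card_mono) (auto simp: restrict_fam_def)
  then show "card A \<le> card (restrict_fam A S) + remainder_bound n t q"
    using card_le_covered_plus_uncovered[of A K] cover[unfolded kernel_cover_def card_P]
    by linarith
qed

end

context cross_intersecting_pair
begin

lemma card_A_le_if_no_common_core:
  assumes coverA: "kernel_cover n q P A KA" and coverB: "kernel_cover n q Q B KB"
    and "KB \<noteq> {}" and "q \<le> n" and no_common: "\<And>S. card S = t \<Longrightarrow> \<exists>Y\<in>KB. \<not> S \<subseteq> Y"
  shows "card A \<le> ((q + (q choose t) * q) choose (t+1)) * odd_dfact (n - (2*t+1))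
      + remainder_bound n t q"
proof -
  have kernels_B: "\<And>Y. Y \<in> KB \<Longrightarrow> kernel n q Q B Y"
    using coverB unfolding kernel_cover_def by blast
  then have "\<And>Y. Y \<in> KB \<Longrightarrow> finite Y \<and> card Y \<le> q"
    unfolding kernel_def by blast
  from no_common_subset_witness[OF \<open>KB \<noteq> {}\<close> this no_common]
  obtain U where "finite U \<and> U \<subseteq> \<Union>KB \<and> card U \<le> q + (q choose t) * q \<and>
      (\<forall>X. (\<forall>Y\<in>KB. t \<le> card (X \<inter> Y)) \<longrightarrow> t + 1 \<le> card (X \<inter> U))" ..
  then have U: "finite U" "U \<subseteq> \<Union>KB" "card U \<le> q + (q choose t) * q"
    and detects: "\<And>X. \<forall>Y\<in>KB. t \<le> card (X \<inter> Y) \<Longrightarrow> t + 1 \<le> card (X \<inter> U)"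
    by auto
  have "U \<inter> P = {}"
    using U(2) kernels_B swap.kernel_disjoint_Q by blast
  define G where "G = {a\<in>A. \<exists>X\<in>KA. X \<subseteq> a}"
  have "t + 1 \<le> card (a \<inter> U)" if "a \<in> G" for a
  proof -
    obtain X where X: "X \<in> KA" "X \<subseteq> a"
      using \<open>a \<in> G\<close> unfolding G_def by blast
    then have "kernel n q P A X"
      using coverA unfolding kernel_cover_def by blast
    then have "t + 1 \<le> card (X \<inter> U)"
      using detects kernels_meet kernels_B \<open>q \<le> n\<close> by blast
    also have "\<dots> \<le> card (a \<inter> U)"
      using X(2) U(1) by (intro card_mono) auto
    finally show ?thesis .
  qed
  moreover have "G \<subseteq> restrict_fam (perfect_matchings n) P"
    using A_subset unfolding G_def by blast
  ultimately have "card G \<le> (card U choose (t+1)) * odd_dfact (n - (card P + (t+1)))"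
    using card_le_if_meets_set finite_P U(1) \<open>U \<inter> P = {}\<close> by blast
  also have "\<dots> \<le> ((q + (q choose t) * q) choose (t+1)) * odd_dfact (n - (2*t+1))"
    using U(3) card_P by (simp add: mult_2 binomial_right_mono)
  finally show ?thesis
    using card_le_covered_plus_uncovered[of A KA] coverA[unfolded kernel_cover_def card_P]
    unfolding G_def by linarith
qed

lemma card_restrict_A_le_if_not_in_B:
  assumes S: "finite S" "card S = t" "S \<inter> P = {}" and b0: "b0 \<in> B" "\<not> S \<subseteq> b0"
  shows "card (restrict_fam A S) \<le> (n - 2*t) * odd_dfact (n - (2*t+1))"
proof (cases "restrict_fam A S = {}")
  case False
  then obtain a1 where a1: "a1 \<in> A" "S \<subseteq> a1"
    unfolding restrict_fam_def by blast
  have b0_pm: "b0 \<in> perfect_matchings_on {1..2*n}" and "b0 \<inter> P = {}"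
    using b0 B_subset B_disjoint_P unfolding restrict_fam_def perfect_matchings_eq by auto
  have a1_pm: "a1 \<in> perfect_matchings_on {1..2*n}" "P \<union> S \<subseteq> a1"
    using a1 A_subset unfolding restrict_fam_def perfect_matchings_eq by auto
  have "card (P \<union> S) = 2*t"
    using finite_P S card_P by (simp add: card_Un_disjoint Int_commute)
  define W where "W = \<Union>(P \<union> S)"
  have "card W = 4*t"
    using card_Union_matching[OF _ a1_pm] \<open>card (P \<union> S) = 2*t\<close> unfolding W_def by simp
  have "W \<subseteq> {1..2*n}"
    using a1_pm unfolding W_def perfect_matchings_on_def by blast
  define D where "D = {e \<in> b0. e \<inter> W = {}}"
  have "card D \<le> n - 2*t"
    using card_edges_disjoint_le[OF _ b0_pm \<open>W \<subseteq> {1..2*n}\<close>] \<open>card W = 4*t\<close>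
    unfolding D_def by simp
  have "restrict_fam A S \<subseteq> (\<Union>e\<in>D. restrict_fam (perfect_matchings n) (insert e (P \<union> S)))"
  proof
    fix a assume a: "a \<in> restrict_fam A S"
    then have a_pm: "a \<in> perfect_matchings_on {1..2*n}" "P \<union> S \<subseteq> a" "a \<in> A"
      using A_subset unfolding restrict_fam_def perfect_matchings_eq by auto
    then obtain e where e: "e \<in> a" "e \<in> b0" "e \<notin> S"
      using exists_Int_notin[OF S(1,2) b0(2)] cross b0(1) by blast
    then have "e \<inter> W = {}"
      using perfect_matching_edge_eq[OF a_pm(1) e(1)] a_pm(2) \<open>b0 \<inter> P = {}\<close>
      unfolding W_def by blast
    then show "a \<in> (\<Union>e\<in>D. restrict_fam (perfect_matchings n) (insert e (P \<union> S)))"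
      using e a_pm unfolding D_def restrict_fam_def perfect_matchings_eq by blast
  qed
  moreover have "2*t + 1 \<le> card (insert e (P \<union> S))" if "e \<in> D" for e
  proof -
    have "e \<noteq> {}"
      using b0_pm that unfolding D_def perfect_matchings_on_def by auto
    then have "e \<notin> P \<union> S"
      using that unfolding D_def W_def by blast
    then show ?thesis
      using \<open>card (P \<union> S) = 2*t\<close> finite_P S(1) by simp
  qed
  moreover have "finite D"
    unfolding D_def using finite_perfect_matching[OF _ b0_pm] by simp
  ultimately have "card (restrict_fam A S) \<le> card D * odd_dfact (n - (2*t+1))"
    by (intro card_le_UN_restrict_perfect_matchings) auto
  then show ?thesis
    using \<open>card D \<le> n - 2*t\<close> le_trans mult_le_mono1 by blast
qed simp

lemma card_restrict_A_le_if_distinct_cores: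
  assumes S: "finite S" "card S = t" "S \<inter> P = {}" and S': "finite S'" "card S' = t" "S' \<inter> P = {}"
    and "S \<noteq> S'" and everywhere: "\<And>a. a \<in> A \<Longrightarrow> S' \<subseteq> a"
  shows "card (restrict_fam A S) \<le> odd_dfact (n - (2*t+1))"
proof -
  have "\<not> S' \<subseteq> S"
    using \<open>S \<noteq> S'\<close> S(1,2) S'(2) card_subset_eq by blast
  then have "t < card (S \<union> S')"
    using S(1,2) S'(1) by (intro psubset_card_mono[of _ S, simplified S(2)]) auto
  moreover have "card (P \<union> (S \<union> S')) = t + card (S \<union> S')"
    using S S' finite_P card_P by (subst card_Un_disjoint) auto
  ultimately have "odd_dfact (n - card (P \<union> (S \<union> S'))) \<le> odd_dfact (n - (2*t+1))"
    by (intro odd_dfact_mono) simp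
  moreover have "restrict_fam A S = restrict_fam A (S \<union> S')"
    using everywhere unfolding restrict_fam_def by auto
  ultimately show ?thesis
    using card_restrict_A_le[of "S \<union> S'"] by simp
qed

lemma card_mult_le_if_no_kernel:
  assumes "kernel_cover n q P A {}"
  shows "card A * card B \<le> remainder_bound n t q * odd_dfact (n - t)"
proof -
  have "card A \<le> remainder_bound n t q"
    using assms card_P unfolding kernel_cover_def by simp
  then show ?thesis
    using swap.card_A_le by (rule mult_le_mono)
qed

lemma card_mult_le_if_no_common_core:
  assumes coverA: "kernel_cover n q P A KA" "KA \<noteq> {}" and coverB: "kernel_cover n q Q B KB" "KB \<noteq> {}"
    and "q \<le> n" and no_common: "\<And>S. card S = t \<Longrightarrow> \<exists>Y\<in>KB. \<not> S \<subseteq> Y"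
  shows "card A * card B \<le> (((q + (q choose t) * q) choose (t+1)) * odd_dfact (n - (2*t+1))
      + remainder_bound n t q) * ((q choose t) * odd_dfact (n - 2*t))"
proof -
  obtain X where "kernel n q P A X"
    using coverA unfolding kernel_cover_def by blast
  then show ?thesis
    using card_A_le_if_no_common_core[OF coverA(1) coverB \<open>q \<le> n\<close> no_common]
      card_B_le_if_kernel by (intro mult_le_mono)
qed

end

context cross_intersecting_pair
begin

lemma card_restrict_small_or_common_core:
  assumes "2*t < n"
    and SA: "finite SA" "card SA = t" "SA \<inter> P = {}" and SB: "finite SB" "card SB = t" "SB \<inter> Q = {}"
    and "SA \<inter> Q = {}" "SB \<inter> P = {}"
  shows "card (restrict_fam A SA) \<le> (n - 2*t) * odd_dfact (n - (2*t+1))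
    \<or> card (restrict_fam B SB) \<le> (n - 2*t) * odd_dfact (n - (2*t+1))
    \<or> restrict_fam A SA = A \<and> restrict_fam B SB = B"
proof -
  consider (A_core_missed) b0 where "b0 \<in> B" "\<not> SA \<subseteq> b0"
    | (B_core_missed) a0 where "a0 \<in> A" "\<not> SB \<subseteq> a0"
    | (cores_everywhere) "\<forall>b\<in>B. SA \<subseteq> b" "\<forall>a\<in>A. SB \<subseteq> a"
    by blast
  then show ?thesis
  proof cases
    case A_core_missed
    then show ?thesis
      using card_restrict_A_le_if_not_in_B[OF SA] by blast
  next
    case B_core_missed
    then show ?thesis
      using swap.card_restrict_A_le_if_not_in_B[OF SB] by blast
  next
    case cores_everywhere
    show ?thesis
    proof (cases "SA = SB")
      case True
      then show ?thesis
        using cores_everywhere unfolding restrict_fam_def by auto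
    next
      case False
      then have "card (restrict_fam A SA) \<le> odd_dfact (n - (2*t+1))"
        using card_restrict_A_le_if_distinct_cores[OF SA SB(1,2) \<open>SB \<inter> P = {}\<close>] cores_everywhere
        by blast
      also have "\<dots> \<le> (n - 2*t) * odd_dfact (n - (2*t+1))"
        using \<open>2*t < n\<close> mult_le_mono1[of 1 "n - 2*t" "odd_dfact (n - (2*t+1))"] by linarith
      finally show ?thesis
        by blast
    qed
  qed
qed

lemma card_mult_le_if_common_cores:
  fixes q :: nat
  defines "M \<equiv> odd_dfact (n - 2*t)" and "M1 \<equiv> odd_dfact (n - (2*t+1))"
    and "R \<equiv> remainder_bound n t q"
  assumes coverA: "kernel_cover n q P A KA" "KA \<noteq> {}"
    and coreA: "card SA = t" "\<And>X. X \<in> KA \<Longrightarrow> SA \<subseteq> X"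
    and coverB: "kernel_cover n q Q B KB" "KB \<noteq> {}"
    and coreB: "card SB = t" "\<And>Y. Y \<in> KB \<Longrightarrow> SB \<subseteq> Y"
    and "2*t < n" and bound: "((n - 2*t) * M1 + R) * (M + R) \<le> M * M"
  shows "card A * card B \<le> M * M"
proof -
  note SA = card_A_le_if_common_core[OF coverA coreA(2)]
  note SB = swap.card_A_le_if_common_core[OF coverB coreB(2)]
  have "card (P \<union> SA) = 2*t" "card (Q \<union> SB) = 2*t"
    using SA SB finite_P finite_Q card_P card_Q coreA(1) coreB(1)
    by (simp_all add: card_Un_disjoint Int_commute)
  then have A_core: "card (restrict_fam A SA) \<le> M" and B_core: "card (restrict_fam B SB) \<le> M"
    using card_restrict_A_le[of SA] swap.card_restrict_A_le[of SB] by (simp_all add: M_def)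
  have A_le: "card A \<le> card (restrict_fam A SA) + R" and B_le: "card B \<le> card (restrict_fam B SB) + R"
    using SA SB unfolding R_def by simp_all
  consider "card (restrict_fam A SA) \<le> (n - 2*t) * M1" | "card (restrict_fam B SB) \<le> (n - 2*t) * M1"
    | "restrict_fam A SA = A" "restrict_fam B SB = B"
    using card_restrict_small_or_common_core[OF \<open>2*t < n\<close> SA(1) coreA(1) SA(2) SB(1) coreB(1) SB(2)
        SA(3) SB(3)]
    unfolding M1_def by blast
  then show ?thesis
  proof cases
    case 1
    then have "card A * card B \<le> ((n - 2*t) * M1 + R) * (M + R)"
      using A_le B_le B_core by (intro mult_le_mono) linarith+
    then show ?thesis
      using bound by (rule le_trans)
  next
    case 2
    then have "card B * card A \<le> ((n - 2*t) * M1 + R) * (M + R)"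
      using A_le B_le A_core by (intro mult_le_mono) linarith+
    then show ?thesis
      using bound by (simp add: mult.commute)
  next
    case 3
    then show ?thesis
      using A_core B_core by (simp add: mult_le_mono)
  qed
qed

lemma card_mult_le:
  fixes q :: nat
  defines "M \<equiv> odd_dfact (n - 2*t)" and "M1 \<equiv> odd_dfact (n - (2*t+1))"
    and "R \<equiv> remainder_bound n t q"
  assumes "q \<le> n" and "2*t < n"
    and no_kernel: "R * odd_dfact (n - t) \<le> M * M"
    and no_common_core: "(((q + (q choose t) * q) choose (t+1)) * M1 + R) * ((q choose t) * M) \<le> M * M"
    and common_cores: "((n - 2*t) * M1 + R) * (M + R) \<le> M * M"
  shows "card A * card B \<le> M * M"
proof -
  obtain KA KB where coverA: "kernel_cover n q P A KA" and coverB: "kernel_cover n q Q B KB"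
    using kernel_cover_exists[OF A_subset finite_P] kernel_cover_exists[OF B_subset finite_Q]
    by blast
  consider (no_kernel_A) "KA = {}" | (no_kernel_B) "KB = {}"
    | (no_core_B) "KA \<noteq> {}" "KB \<noteq> {}" "\<And>S. card S = t \<Longrightarrow> \<exists>Y\<in>KB. \<not> S \<subseteq> Y"
    | (no_core_A) "KA \<noteq> {}" "KB \<noteq> {}" "\<And>S. card S = t \<Longrightarrow> \<exists>X\<in>KA. \<not> S \<subseteq> X"
    | (cores) SA SB where "KA \<noteq> {}" "KB \<noteq> {}" "card SA = t" "\<forall>X\<in>KA. SA \<subseteq> X"
        "card SB = t" "\<forall>Y\<in>KB. SB \<subseteq> Y"
    by blast
  then show ?thesis
  proof cases
    case no_kernel_A
    then have "card A * card B \<le> R * odd_dfact (n - t)"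
      using card_mult_le_if_no_kernel coverA unfolding R_def by simp
    then show ?thesis
      using no_kernel by (rule le_trans)
  next
    case no_kernel_B
    then have "card B * card A \<le> R * odd_dfact (n - t)"
      using swap.card_mult_le_if_no_kernel coverB unfolding R_def by simp
    then show ?thesis
      using no_kernel by (simp add: mult.commute)
  next
    case no_core_B
    then have "card A * card B \<le> (((q + (q choose t) * q) choose (t+1)) * M1 + R) * ((q choose t) * M)"
      using card_mult_le_if_no_common_core[OF coverA _ coverB _ \<open>q \<le> n\<close>]
      unfolding M_def M1_def R_def by blast
    then show ?thesis
      using no_common_core by (rule le_trans)
  next
    case no_core_A
    then have "card B * card A \<le> (((q + (q choose t) * q) choose (t+1)) * M1 + R) * ((q choose t) * M)"
      using swap.card_mult_le_if_no_common_core[OF coverB _ coverA _ \<open>q \<le> n\<close>]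
      unfolding M_def M1_def R_def by blast
    then show ?thesis
      using le_trans[OF _ no_common_core] by (simp add: mult.commute)
  next
    case cores
    then show ?thesis
      using card_mult_le_if_common_cores[OF coverA cores(1,3) _ coverB cores(2,5) _ \<open>2*t < n\<close>]
        cores(4,6) common_cores unfolding M_def M1_def R_def by blast
  qed
qed

end

section \<open>Choice of the parameter\<close>

text \<open>Each of the \<open>q + 1 - t\<close> factors of the double factorial between \<open>n - (t + q + 1)\<close>
  and \<open>n - 2*t\<close> is at least \<open>3(n + 1)/2\<close>.\<close>

lemma remainder_bound_mult_le:
  assumes "4*t + 4*q + 5 \<le> n" and "t \<le> q + 1"
    and small: "2^(q+1-t) * (n+1)^t * Z \<le> 3^(q+1-t)"
  shows "remainder_bound n t q * Z \<le> odd_dfact (n - 2*t)"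
proof -
  define a where "a = n - (t + q + 1)"
  define k where "k = q + 1 - t"
  have "q + 1 = t + k" and "a + k = n - 2*t" and "3*(n+1) \<le> 2*(2*a+1)"
    unfolding a_def k_def using assms(1,2) by simp_all
  have "2^k * (remainder_bound n t q * Z) = ((n+1)^k * odd_dfact a) * (2^k * (n+1)^t * Z)"
    unfolding remainder_bound_def a_def \<open>q + 1 = t + k\<close> by (simp add: power_add algebra_simps)
  also have "\<dots> \<le> ((n+1)^k * odd_dfact a) * 3^k"
    using small unfolding k_def by (intro mult_le_mono2) simp
  also have "\<dots> = (3*(n+1))^k * odd_dfact a"
    by (simp only: power_mult_distrib mult.commute mult.left_commute)
  also have "\<dots> \<le> (2*(2*a+1))^k * odd_dfact a"
    using \<open>3*(n+1) \<le> 2*(2*a+1)\<close> by (intro mult_le_mono1 power_mono) auto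
  also have "\<dots> = 2^k * ((2*a+1)^k * odd_dfact a)"
    by (simp only: power_mult_distrib mult.assoc)
  also have "\<dots> \<le> 2^k * odd_dfact (n - 2*t)"
    using odd_dfact_add_ge[of a k] \<open>a + k = n - 2*t\<close> by (intro mult_le_mono2) simp
  finally show ?thesis
    by simp
qed

text \<open>The factor \<open>10 (2n)^t (q choose t)\<close> dominates each of the multipliers \<open>(2n)^t\<close>,
  \<open>2 (q choose t)\<close> and \<open>5\<close> of the remainder bound needed below.\<close>

definition admissible_spread_parameter :: "nat \<Rightarrow> nat \<Rightarrow> nat \<Rightarrow> bool" where
  "admissible_spread_parameter n t q \<longleftrightarrow> t \<le> q \<and> 4*t + 4*q + 5 \<le> n \<and>
     2^(q+1-t) * (n+1)^t * (10 * (2*n)^t * (q choose t)) \<le> 3^(q+1-t) \<and>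
     2 * (((q + (q choose t) * q) choose (t+1)) * (q choose t)) \<le> 2*(n - 2*t) - 1"

lemma remainder_bound_mult_le_if_admissible:
  assumes q: "admissible_spread_parameter n t q" and "Z \<le> 10 * (2*n)^t * (q choose t)"
  shows "remainder_bound n t q * Z \<le> odd_dfact (n - 2*t)"
proof -
  have "2^(q+1-t) * (n+1)^t * Z \<le> 2^(q+1-t) * (n+1)^t * (10 * (2*n)^t * (q choose t))"
    using assms(2) by (rule mult_le_mono2)
  also have "\<dots> \<le> 3^(q+1-t)"
    using q unfolding admissible_spread_parameter_def by blast
  finally show ?thesis
    using remainder_bound_mult_le q unfolding admissible_spread_parameter_def by simp
qed

lemma admissible_no_kernel_bound:
  fixes n t q :: nat
  defines "M \<equiv> odd_dfact (n - 2*t)" and "R \<equiv> remainder_bound n t q"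
  assumes q: "admissible_spread_parameter n t q"
  shows "R * odd_dfact (n - t) \<le> M * M"
proof -
  have "4*t \<le> n"
    using q unfolding admissible_spread_parameter_def by simp
  have "odd_dfact (n - t) = odd_dfact ((n - 2*t) + t)"
    using \<open>4*t \<le> n\<close> by (simp add: algebra_simps)
  also have "\<dots> \<le> (2*((n - 2*t) + t))^t * M"
    unfolding M_def by (rule odd_dfact_add_le)
  also have "\<dots> \<le> (2*n)^t * M"
    using \<open>4*t \<le> n\<close> by (intro mult_le_mono1 power_mono) auto
  finally have "R * odd_dfact (n - t) \<le> (R * (2*n)^t) * M"
    by (simp add: mult.assoc)
  also have "\<dots> \<le> M * M"
    using q remainder_bound_mult_le_if_admissible[OF q, of "(2*n)^t"]
    unfolding M_def R_def admissible_spread_parameter_def by (intro mult_le_mono1) (simp add: Suc_leI)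
  finally show ?thesis .
qed

lemma admissible_no_common_core_bound:
  fixes n t q :: nat
  defines "M \<equiv> odd_dfact (n - 2*t)" and "M1 \<equiv> odd_dfact (n - (2*t+1))"
    and "R \<equiv> remainder_bound n t q"
    and "C0 \<equiv> q choose t" and "C1 \<equiv> (q + (q choose t) * q) choose (t+1)"
  assumes q: "admissible_spread_parameter n t q"
  shows "(C1 * M1 + R) * (C0 * M) \<le> M * M"
proof -
  have "2 * (C1 * C0) * M1 \<le> (2*(n - 2*t) - 1) * M1"
    using q unfolding C1_def C0_def admissible_spread_parameter_def by (intro mult_le_mono1) simp
  also have "\<dots> = M"
    using q odd_dfact_diff_eq[of "2*t" n] unfolding M_def M1_def admissible_spread_parameter_def
    by simp
  finally have "2 * (C1 * C0 * M1) \<le> M"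
    by (simp add: mult.assoc)
  moreover have "R * (2 * C0) \<le> M"
    using q remainder_bound_mult_le_if_admissible[OF q, of "2 * C0"]
    unfolding M_def R_def C0_def admissible_spread_parameter_def by (simp add: Suc_leI)
  ultimately have "2 * ((C1 * M1 + R) * C0) \<le> 2 * M"
    by (simp add: algebra_simps)
  then have "((C1 * M1 + R) * C0) * M \<le> M * M"
    by (intro mult_le_mono1) linarith
  then show ?thesis
    by (simp add: mult.assoc)
qed

lemma admissible_common_cores_bound:
  fixes n t q :: nat
  defines "M \<equiv> odd_dfact (n - 2*t)" and "M1 \<equiv> odd_dfact (n - (2*t+1))"
    and "R \<equiv> remainder_bound n t q"
  assumes q: "admissible_spread_parameter n t q"
  shows "((n - 2*t) * M1 + R) * (M + R) \<le> M * M"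
proof -
  have "4*t + 5 \<le> n"
    using q unfolding admissible_spread_parameter_def by simp
  then have "5 * (n - 2*t) * M1 \<le> 3 * (2*(n - 2*t) - 1) * M1"
    by (intro mult_le_mono1) simp
  then have "5 * ((n - 2*t) * M1) \<le> 3 * M"
    using odd_dfact_diff_eq[of "2*t" n] \<open>4*t + 5 \<le> n\<close> unfolding M_def M1_def
    by (simp add: mult.assoc)
  moreover have "5 * R \<le> M"
    using q remainder_bound_mult_le_if_admissible[OF q, of 5]
    unfolding M_def R_def admissible_spread_parameter_def by (simp add: Suc_leI mult.commute)
  ultimately have "(5 * ((n - 2*t) * M1) + 5 * R) * (5 * M + 5 * R) \<le> (3 * M + M) * (5 * M + M)"
    by (intro mult_le_mono) linarith+
  then show ?thesis
    by (simp add: algebra_simps)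
qed

lemma binomial_le_power: "n choose k \<le> n^k"
  by (cases "k \<le> n") (simp_all add: binomial_le_pow binomial_eq_0)

lemma binomial_constants_le_power:
  assumes "t \<le> q"
  shows "2 * (((q + (q choose t) * q) choose (t+1)) * (q choose t)) + 4*t + 4*q + 5
    \<le> (2^(t+2) + 4*t + 9) * (q+1)^((t+1)*(t+1) + t)"
proof -
  define s where "s = q + 1"
  define D where "D = (t+1)*(t+1) + t"
  have "1 \<le> s" "q \<le> s"
    unfolding s_def by simp_all
  have C0: "q choose t \<le> s^t"
    using binomial_le_power[of q t] power_mono[OF \<open>q \<le> s\<close>, of t] by simp
  have "q + (q choose t) * q \<le> 2 * s^(t+1)"
  proof -
    have "s \<le> s^(t+1)"
      using \<open>1 \<le> s\<close> by (rule self_le_power) simp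
    then have "q \<le> s^(t+1)"
      using \<open>q \<le> s\<close> by linarith
    moreover have "(q choose t) * q \<le> s^t * s"
      using C0 \<open>q \<le> s\<close> by (rule mult_le_mono)
    ultimately show ?thesis
      by (simp add: mult.commute)
  qed
  then have "(q + (q choose t) * q) choose (t+1) \<le> (2 * s^(t+1))^(t+1)"
    using binomial_le_power le_trans power_mono by blast
  then have "2 * (((q + (q choose t) * q) choose (t+1)) * (q choose t))
      \<le> 2 * ((2 * s^(t+1))^(t+1) * s^t)"
    using C0 by (intro mult_le_mono2 mult_le_mono)
  also have "\<dots> = 2^(t+2) * s^D"
    unfolding D_def by (simp add: power_mult_distrib power_mult[symmetric] power_add algebra_simps)
  finally have "2 * (((q + (q choose t) * q) choose (t+1)) * (q choose t)) \<le> 2^(t+2) * s^D" .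
  moreover have "4*t + 4*q + 5 \<le> (4*t + 9) * s^D"
  proof -
    have "s \<le> s^D" "1 \<le> s^D"
      using \<open>1 \<le> s\<close> unfolding D_def by (simp_all add: self_le_power)
    then have "4*t + 4*s + 1 \<le> 4*t*s^D + 4*s^D + s^D"
      by (intro add_mono) simp_all
    also have "\<dots> \<le> (4*t + 9) * s^D"
      by (simp add: algebra_simps)
    finally show ?thesis
      unfolding s_def by simp
  qed
  ultimately show ?thesis
    unfolding s_def D_def by (simp add: algebra_simps)
qed

lemma eventually_exp_dominates: "\<exists>k0. \<forall>k\<ge>k0. C * (k + s)^E * 2^k \<le> (3::nat)^k"
proof -
  have "eventually (\<lambda>k::nat. real C * (real k + real s)^E * 2^k \<le> 3^k) at_top"
    by real_asymp
  then obtain k0 where "\<And>k. k \<ge> k0 \<Longrightarrow> real C * (real k + real s)^E * 2^k \<le> 3^k"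
    by (auto simp: eventually_at_top_linorder)
  then have "\<And>k. k \<ge> k0 \<Longrightarrow> real (C * (k + s)^E * 2^k) \<le> real (3^k)"
    by simp
  then show ?thesis
    by (auto simp only: of_nat_le_iff)
qed

lemma admissible_spread_parameterI:
  assumes "t \<le> q" and poly: "(2^(t+2) + 4*t + 9) * (q+1)^((t+1)*(t+1) + t) \<le> n"
    and exp: "2^(q+1-t) * (10 * (2*n+2)^(3*t)) \<le> 3^(q+1-t)"
  shows "admissible_spread_parameter n t q"
proof -
  have constraints: "2 * (((q + (q choose t) * q) choose (t+1)) * (q choose t)) + 4*t + 4*q + 5 \<le> n"
    using binomial_constants_le_power[OF \<open>t \<le> q\<close>] poly by (rule le_trans)
  have "(n+1)^t * (10 * (2*n)^t * (q choose t)) \<le> (2*n+2)^t * (10 * (2*n+2)^t * (2*n+2)^t)"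
    using constraints binomial_le_power[of q t] power_mono[of q "2*n+2" t]
    by (intro mult_le_mono power_mono) auto
  also have "\<dots> = 10 * (2*n+2)^(3*t)"
    by (simp add: power_add[symmetric] algebra_simps mult_2)
  finally have "2^(q+1-t) * ((n+1)^t * (10 * (2*n)^t * (q choose t))) \<le> 3^(q+1-t)"
    using exp le_trans mult_le_mono2 by blast
  then show ?thesis
    using \<open>t \<le> q\<close> constraints unfolding admissible_spread_parameter_def by (simp add: mult.assoc)
qed

text \<open>Take \<open>q + 1 - t\<close> as large as the polynomial constraint \<open>c (q + 1)^D \<le> n\<close> allows;
  then \<open>n\<close> is polynomial in \<open>q\<close>, so \<open>3^(q+1-t)\<close> beats the polynomial factors.\<close>

lemma eventually_admissible_spread_parameter: "\<exists>n0. \<forall>n\<ge>n0. \<exists>q. admissible_spread_parameter n t q"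
proof -
  define D where "D = (t+1)*(t+1) + t"
  define c where "c = 2^(t+2) + 4*t + 9"
  define g where "g k = c * (k + t)^D" for k
  obtain k0 where k0: "\<And>k. k \<ge> k0 \<Longrightarrow> 10 * (4*c)^(3*t) * (k + (t+1))^(D*(3*t)) * 2^k \<le> (3::nat)^k"
    using eventually_exp_dominates by blast
  have g_ge: "k \<le> g k" for k
  proof (cases "k = 0")
    case False
    then have "k + t \<le> (k + t)^D"
      unfolding D_def by (intro self_le_power) auto
    moreover have "(k + t)^D \<le> c * (k + t)^D"
      unfolding c_def by simp
    ultimately show ?thesis
      unfolding g_def by linarith
  qed simp
  have "\<exists>q. admissible_spread_parameter n t q" if "g (Suc k0) \<le> n" for n
  proof -
    define K where "K = {k. g k \<le> n}"
    have "finite K"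
      using g_ge by (intro finite_subset[of K "{..n}"]) (auto simp: K_def intro: le_trans)
    define k where "k = Max K"
    have "Suc k0 \<in> K"
      using that unfolding K_def by simp
    then have "Suc k0 \<le> k" "g k \<le> n"
      using Max_in[OF \<open>finite K\<close>] Max_ge[OF \<open>finite K\<close>] unfolding k_def K_def by auto
    have "Suc k \<notin> K"
      using Max_ge[OF \<open>finite K\<close>, of "Suc k"] unfolding k_def by auto
    then have "n < g (Suc k)"
      unfolding K_def by simp
    have "2^k * (10 * (2*n+2)^(3*t)) \<le> 2^k * (10 * (4 * (c * (k + (t+1))^D))^(3*t))"
      using \<open>n < g (Suc k)\<close> unfolding g_def by (intro mult_le_mono2 power_mono) simp_all
    also have "\<dots> = 10 * (4*c)^(3*t) * (k + (t+1))^(D*(3*t)) * 2^k"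
      by (simp add: power_mult_distrib power_mult)
    also have "\<dots> \<le> 3^k"
      using k0 \<open>Suc k0 \<le> k\<close> by simp
    finally have "2^k * (10 * (2*n+2)^(3*t)) \<le> 3^k" .
    moreover have "t \<le> k + t - 1" "k + t - 1 + 1 = k + t"
      using \<open>Suc k0 \<le> k\<close> by auto
    ultimately show ?thesis
      using \<open>g k \<le> n\<close> unfolding g_def c_def D_def
      by (intro exI[of _ "k + t - 1"] admissible_spread_parameterI) simp_all
  qed
  then show ?thesis
    by blast
qed

section \<open>Families through \<open>T*\<close> and \<open>T\<close>\<close>

lemma Tstar_eq_image: "Tstar t = (\<lambda>i. {2*i-1, 2*i}) ` {1..t}"
  unfolding Tstar_def by blast

lemma card_Tstar: "card (Tstar t) = t"
proof -
  have "inj_on (\<lambda>i::nat. {2*i-1, 2*i}) {1..t}"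
  proof (rule inj_onI)
    fix i j :: nat assume "j \<in> {1..t}" and "{2*i-1, 2*i} = {2*j-1, 2*j}"
    then have "2*i = 2*j-1 \<or> 2*i = 2*j"
      by blast
    then show "i = j"
      using \<open>j \<in> {1..t}\<close> by auto
  qed
  then show ?thesis
    unfolding Tstar_eq_image by (simp add: card_image)
qed

lemma finite_Tstar: "finite (Tstar t)"
  unfolding Tstar_eq_image by simp

lemma Tstar_covers: "v \<in> {1..2*t} \<Longrightarrow> \<exists>f\<in>Tstar t. v \<in> f"
proof -
  assume v: "v \<in> {1..2*t}"
  define i where "i = (v + 1) div 2"
  have "i \<in> {1..t}" "v \<in> {2*i-1, 2*i}"
    using v unfolding i_def by auto
  then show ?thesis
    unfolding Tstar_eq_image by blast
qed

lemma perfect_matching_disjoint_Tstar: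
  assumes m: "m \<in> perfect_matchings n" "T \<subseteq> m" and "T \<inter> Tstar t = {}"
    and hits: "\<forall>i\<in>{1..t}. 1 \<le> card (verts T \<inter> {2*i-1, 2*i})"
  shows "m \<inter> Tstar t = {}"
proof (rule ccontr)
  assume "m \<inter> Tstar t \<noteq> {}"
  then obtain i where i: "i \<in> {1..t}" "{2*i-1, 2*i} \<in> m"
    unfolding Tstar_def by blast
  then have "verts T \<inter> {2*i-1, 2*i} \<noteq> {}"
    using hits by fastforce
  then obtain v e where "e \<in> T" "v \<in> e" "v \<in> {2*i-1, 2*i}"
    unfolding verts_def by blast
  then have "e = {2*i-1, 2*i}"
    using perfect_matching_edge_eq[of m "{1..2*n}"] m i(2) by (auto simp: perfect_matchings_eq)
  then show False
    using \<open>e \<in> T\<close> \<open>T \<inter> Tstar t = {}\<close> i(1) unfolding Tstar_def by blast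
qed

lemma perfect_matching_disjoint_T:
  assumes m: "m \<in> perfect_matchings n" "Tstar t \<subseteq> m" and "T \<inter> Tstar t = {}"
    and "T \<subseteq> Delta n {1..2*t}"
  shows "m \<inter> T = {}"
proof (rule ccontr)
  assume "m \<inter> T \<noteq> {}"
  then obtain e v where e: "e \<in> m" "e \<in> T" "v \<in> e" "v \<in> {1..2*t}"
    using \<open>T \<subseteq> Delta n {1..2*t}\<close> unfolding Delta_def by blast
  then obtain f where "f \<in> Tstar t" "v \<in> f"
    using Tstar_covers by blast
  then have "e = f"
    using perfect_matching_edge_eq[of m "{1..2*n}"] m e by (auto simp: perfect_matchings_eq)
  then show False
    using e(2) \<open>f \<in> Tstar t\<close> \<open>T \<inter> Tstar t = {}\<close> by blast
qed

lemma card_restrict_Tstar_mult_le: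
  assumes F: "F \<subseteq> perfect_matchings n" "t_intersecting t F"
    and T: "T \<subseteq> edges_K n" "card T = t" "T \<inter> Tstar t = {}"
      "\<forall>i\<in>{1..t}. 1 \<le> card (verts T \<inter> {2*i-1, 2*i})" "T \<subseteq> Delta n {1..2*t}"
    and q: "admissible_spread_parameter n t q"
  shows "card (restrict_fam F (Tstar t)) * card (restrict_fam F T) \<le> odd_dfact (n - 2*t)^2"
proof -
  interpret cross_intersecting_pair n t "Tstar t" T "restrict_fam F (Tstar t)" "restrict_fam F T"
  proof
    show "finite T"
      using T(1) finite_edges_K by (rule finite_subset)
    show "a \<inter> T = {}" if "a \<in> restrict_fam F (Tstar t)" for a
      using that F(1) T(3,5) perfect_matching_disjoint_T unfolding restrict_fam_def by blast
    show "b \<inter> Tstar t = {}" if "b \<in> restrict_fam F T" for b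
      using that F(1) T(3,4) perfect_matching_disjoint_Tstar unfolding restrict_fam_def by blast
  qed (use F T in \<open>auto simp: restrict_fam_def t_intersecting_def finite_Tstar card_Tstar\<close>)
  have "q \<le> n" "2*t < n"
    using q unfolding admissible_spread_parameter_def by auto
  then show ?thesis
    using card_mult_le admissible_no_kernel_bound[OF q] admissible_no_common_core_bound[OF q]
      admissible_common_cores_bound[OF q] by (simp add: power2_eq_square)
qed

theorem mainTheorem19:
  shows "\<forall>t::nat. \<exists>n0::nat. \<forall>n\<ge>n0. \<forall>F T.
    F \<subseteq> perfect_matchings n \<and> t_intersecting t F \<and>
    T \<subseteq> edges_K n \<and> card T = t \<and> pairwise_disjoint_edges T \<and>
    T \<inter> Tstar t = {} \<and>
    (\<forall>i\<in>{1..t}. card (verts T \<inter> {2*i-1, 2*i}) \<ge> 1) \<and>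
    T \<subseteq> Delta n {1..2*t}
    \<longrightarrow> card (restrict_fam F (Tstar t)) * card (restrict_fam F T) \<le> (odd_dfact (n - 2*t))^2"
  using eventually_admissible_spread_parameter card_restrict_Tstar_mult_le by meson

end
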